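(* Let $Y^1,\dots,Y^{n+3}\in\mathbb{R}^n$ with components $Y^\alpha=(Y^\alpha_i)_{i=1}^n$. Then $$\sum_{\alpha,\beta'=1}^{n+3}(Y^\alpha)^T\mathbb X^{\alpha\beta'}Y^{\beta'}=\varepsilon\nu\big|Y^{n+1}+(n+2)\Theta Y^{n+3}\big|^2+4\varepsilon\kappa\Theta^2|Y^{n+3}|^2$$ $$+\frac{\varepsilon\mu\Theta}2\sum_{i,\alpha=1}^n\Big|\Big(Y^\alpha_i+Y^i_\alpha-\frac2n\sum_{j=1}^nY^j_j\delta_{i\alpha}\Big)+2\Big(u_iY^{n+3}_\alpha+u_\alpha Y^{n+3}_i-\frac2n\sum_{j=1}^nu_jY^{n+3}_j\delta_{i\alpha}\Big)\Big|^2,$$ and this quantity is nonnegative; in particular the matrix $\mathbb X$ is nonnegative.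
   Context: Let $n\ge1$, $\varepsilon>0$, $\Theta>0$, $u\in\mathbb{R}^n$, and let $\mu,\kappa,\nu$ be positive reals (in the paper $\mu=\rho\Theta\langle m^{-1}\rangle_\beta$, $\kappa=\frac{n+2}2\rho\Theta\langle m^{-2}\rangle_\beta$, $\nu=\rho\Theta(\langle m^{-2}\rangle_\beta-\langle m^{-1}\rangle_\beta^2)$, which are positive). With $(e_1,\dots,e_n)$ the canonical basis of $\mathbb{R}^n$, $(a\otimes b)_{ij}=a_ib_j$, $\mathrm 0_n$ the zero matrix, define $n\times n$ blocks $\mathbb X^{\alpha\beta'}$, $\alpha,\beta'\in\{1,\dots,n+3\}$: $\mathbb X^{\alpha\beta'}=\varepsilon\mu\Theta(\mathrm I_n\delta^{\alpha\beta'}+e_{\beta'}\otimes e_\alpha-\frac2ne_\alpha\otimes e_{\beta'})$ for $\alpha,\beta'\le n$; $\mathbb X^{\alpha,n+1}=\mathbb X^{\alpha,n+2}=(\mathbb X^{n+1,\alpha})^T=(\mathbb X^{n+2,\alpha})^T=\mathrm 0_n$ for $\alpha\le n$; $\mathbb X^{\alpha,n+3}=(\mathbb X^{n+3,\alpha})^T=2\varepsilon\mu\Theta(u_\alpha\mathrm I_n+u\otimes e_\alpha-\frac2ne_\alpha\otimes u)$ for $\alpha\le n$; $\mathbb X^{n+1,n+1}=\varepsilon\nu\mathrm I_n$, $\mathbb X^{n+1,n+2}=\mathbb X^{n+2,n+1}=\mathbb X^{n+2,n+2}=\mathrm 0_n$; $\mathbb X^{n+1,n+3}=\mathbb X^{n+3,n+1}=(n+2)\varepsilon\nu\Theta\mathrm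 I_n$, $\mathbb X^{n+2,n+3}=\mathbb X^{n+3,n+2}=\mathrm 0_n$; $\mathbb X^{n+3,n+3}=\varepsilon\Theta[((n+2)^2\nu\Theta+4\kappa\Theta+4\mu|u|^2)\mathrm I_n+4\frac{n-2}n\mu\,u\otimes u]$. *)

theory Defs
  imports Complex_Main
begin

text \<open>Conventions: vectors in R^n are functions nat => real used on indices 1..n;
  the family Y^1..Y^(n+3) is Y :: nat => nat => real, Y a i = i-th component of Y^a.
  Block X^(a,b) is the n x n matrix with entries Xblk ... a b i j (i,j in 1..n).\<close>

definition kd :: "nat \<Rightarrow> nat \<Rightarrow> real" where
  "kd i j = (if i = j then 1 else 0)"

definition sqnorm :: "nat \<Rightarrow> (nat \<Rightarrow> real) \<Rightarrow> real" where
  "sqnorm n v = (\<Sum>j=1..n. (v j)^2)"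

definition Xblk :: "nat \<Rightarrow> real \<Rightarrow> real \<Rightarrow> real \<Rightarrow> real \<Rightarrow> real \<Rightarrow> (nat \<Rightarrow> real)
    \<Rightarrow> nat \<Rightarrow> nat \<Rightarrow> nat \<Rightarrow> nat \<Rightarrow> real" where
  "Xblk n \<epsilon> \<Theta> \<mu> \<kappa> \<nu> u a b i j =
    (if a \<le> n \<and> b \<le> n then
       \<epsilon>*\<mu>*\<Theta>*(kd a b * kd i j + kd i b * kd j a - 2 / real n * kd i a * kd j b)
     else if a \<le> n \<and> (b = n+1 \<or> b = n+2) then 0
     else if (a = n+1 \<or> a = n+2) \<and> b \<le> n then 0
     else if a \<le> n \<and> b = n+3 then
       2*\<epsilon>*\<mu>*\<Theta>*(u a * kd i j + u i * kd j a - 2 / real n * kd i a * u j)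
     else if a = n+3 \<and> b \<le> n then
       \<comment> \<open>transpose of the block (b, n+3)\<close>
       2*\<epsilon>*\<mu>*\<Theta>*(u b * kd j i + u j * kd i b - 2 / real n * kd j b * u i)
     else if a = n+1 \<and> b = n+1 then \<epsilon>*\<nu>*kd i j
     else if (a = n+1 \<and> b = n+2) \<or> (a = n+2 \<and> b = n+1) \<or> (a = n+2 \<and> b = n+2) then 0
     else if (a = n+1 \<and> b = n+3) \<or> (a = n+3 \<and> b = n+1) then
       (real n + 2)*\<epsilon>*\<nu>*\<Theta>*kd i j
     else if (a = n+2 \<and> b = n+3) \<or> (a = n+3 \<and> b = n+2) then 0
     else if a = n+3 \<and> b = n+3 then
       \<epsilon>*\<Theta>*(((real n + 2)^2*\<nu>*\<Theta> + 4*\<kappa>*\<Theta> + 4*\<mu>*sqnorm n u) * kd i j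
               + 4*(real n - 2)/real n*\<mu>*(u i * u j))
     else 0)"

definition Xquad :: "nat \<Rightarrow> real \<Rightarrow> real \<Rightarrow> real \<Rightarrow> real \<Rightarrow> real \<Rightarrow> (nat \<Rightarrow> real)
    \<Rightarrow> (nat \<Rightarrow> nat \<Rightarrow> real) \<Rightarrow> real" where
  "Xquad n \<epsilon> \<Theta> \<mu> \<kappa> \<nu> u Y =
    (\<Sum>a=1..n+3. \<Sum>b=1..n+3. \<Sum>i=1..n. \<Sum>j=1..n.
        Y a i * Xblk n \<epsilon> \<Theta> \<mu> \<kappa> \<nu> u a b i j * Y b j)"

end

theory Submission
  imports Defs
begin

(* Write A = (Y^a_i) for the n x n matrix of the first n vectors, v = Y^(n+1), w = Y^(n+3);
   Y^(n+2) only meets zero blocks.  The top-left blocks of X are eps mu Theta times the tensor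
   d_ab d_ij + d_ib d_ja - (2/n) d_ia d_jb, which realises the bilinear form
   B(A,A') = <A,A'> + <A,A'^T> - (2/n) tr A tr A', i.e. half the Frobenius product of the
   symmetric trace-free parts A + A^T - (2/n)(tr A) I.  The blocks X^(a,n+3) are the same tensor
   contracted with u (x) w, and the u-dependent part of X^(n+3,n+3) is 4 eps mu Theta B(u (x) w, u (x) w).
   So the form is eps mu Theta B(A + 2 u (x) w, A + 2 u (x) w) plus a quadratic form in (v, w)
   alone, which completes to eps nu |v + (n+2) Theta w|^2 + 4 eps kappa Theta^2 |w|^2. *)

lemma kd_commute: "kd j i = kd i j"
  by (simp add: kd_def)

lemma kd_mult: "kd i j * x = (if i = j then x else 0)" "x * kd i j = (if i = j then x else 0)"
  by (simp_all add: kd_def)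

lemma mult_if_zero:
  "(if P then x else 0) * y = (if P then x * y else (0::real))"
  "y * (if P then x else 0) = (if P then y * x else (0::real))"
  by simp_all

lemma sum_if_zero_const:
  "(\<Sum>x\<in>A. if P then f x else 0) = (if P then (\<Sum>x\<in>A. f x) else (0::real))"
  by simp

lemmas kd_simps = kd_mult mult_if_zero sum_if_zero_const

lemma contract_kd:
  "(\<Sum>i=1..n. \<Sum>j=1..n. v i * (c * kd i j) * w j) = c * (\<Sum>i=1..n. v i * w i)"
  by (simp add: kd_simps sum_distrib_left mult_ac)

lemma contract_kd_plus_rank_one:
  "(\<Sum>i=1..n. \<Sum>j=1..n. w i * (c * (K * kd i j + L * (u i * u j))) * w j)
   = c * K * (\<Sum>i=1..n. w i * w i) + c * L * (\<Sum>i=1..n. u i * w i)^2"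
  by (simp add: kd_simps ring_distribs sum.distrib sum_distrib_left power2_eq_square sum_product
      mult_ac)

definition trace :: "nat \<Rightarrow> (nat \<Rightarrow> nat \<Rightarrow> real) \<Rightarrow> real" where
  "trace n M = (\<Sum>a=1..n. M a a)"

definition sym_traceless_form ::
    "nat \<Rightarrow> (nat \<Rightarrow> nat \<Rightarrow> real) \<Rightarrow> (nat \<Rightarrow> nat \<Rightarrow> real) \<Rightarrow> real" where
  "sym_traceless_form n M M' =
     (\<Sum>a=1..n. \<Sum>i=1..n. M a i * M' a i + M a i * M' i a) - 2 / real n * trace n M * trace n M'"

lemma sym_traceless_form_commute: "sym_traceless_form n M M' = sym_traceless_form n M' M"
proof -
  have "(\<Sum>a=1..n. \<Sum>i=1..n. M a i * M' i a) = (\<Sum>a=1..n. \<Sum>i=1..n. M' a i * M i a)"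
    by (subst sum.swap) (simp add: mult.commute)
  then show ?thesis
    by (simp add: sym_traceless_form_def sum.distrib mult.commute)
qed

lemma sym_traceless_form_add_left:
  "sym_traceless_form n (\<lambda>a i. A a i + t * B a i) C
   = sym_traceless_form n A C + t * sym_traceless_form n B C"
  unfolding sym_traceless_form_def trace_def
  by (simp add: algebra_simps sum.distrib sum_distrib_left)

lemma sym_traceless_form_add_scaled:
  "sym_traceless_form n (\<lambda>a i. A a i + t * B a i) (\<lambda>a i. A a i + t * B a i)
   = sym_traceless_form n A A + 2 * t * sym_traceless_form n A B + t^2 * sym_traceless_form n B B"
  by (simp add: sym_traceless_form_add_left
      sym_traceless_form_commute[of n _ "\<lambda>a i. A a i + t * B a i"]
      sym_traceless_form_commute[of n B A] algebra_simps power2_eq_square)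

lemma sym_traceless_form_rank_one:
  "sym_traceless_form n (\<lambda>a i. u a * w i) (\<lambda>a i. u a * w i)
   = (\<Sum>a=1..n. (u a)^2) * (\<Sum>i=1..n. (w i)^2) + (1 - 2 / real n) * (\<Sum>a=1..n. u a * w a)^2"
proof -
  have "(\<Sum>a=1..n. \<Sum>i=1..n. u a * w i * (u a * w i)) = (\<Sum>a=1..n. (u a)^2) * (\<Sum>i=1..n. (w i)^2)"
    by (simp add: sum_product power2_eq_square mult_ac)
  moreover have "(\<Sum>a=1..n. \<Sum>i=1..n. u a * w i * (u i * w a)) = (\<Sum>a=1..n. u a * w a)^2"
    by (simp add: sum_product power2_eq_square mult_ac)
  ultimately show ?thesis
    unfolding sym_traceless_form_def trace_def
    by (simp add: sum.distrib algebra_simps power2_eq_square)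
qed

lemma sum_sq_sym_traceless:
  assumes "n > 0"
  shows "(\<Sum>i=1..n. \<Sum>a=1..n. (M a i + M i a - 2 / real n * trace n M * kd i a)^2)
    = 2 * sym_traceless_form n M M"
proof -
  define d where "d = 2 / real n"
  have sq: "(M a i + M i a - d * trace n M * kd i a)^2
      = (M a i + M i a)^2 - 2 * d * trace n M * (kd i a * (M a i + M i a))
        + d^2 * (trace n M)^2 * kd i a" for i a
    by (simp add: kd_def power2_eq_square algebra_simps)
  have "(\<Sum>i=1..n. \<Sum>a=1..n. (M a i + M i a - d * trace n M * kd i a)^2)
      = (\<Sum>i=1..n. \<Sum>a=1..n. (M a i + M i a)^2)
        - 2 * d * trace n M * (\<Sum>i=1..n. \<Sum>a=1..n. kd i a * (M a i + M i a))
        + d^2 * (trace n M)^2 * (\<Sum>i=1..n. \<Sum>a=1..n. kd i a)"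
    by (simp only: sq sum.distrib sum_subtractf sum_distrib_left[symmetric])
  also have "(\<Sum>i=1..n. \<Sum>a=1..n. (M a i + M i a)^2)
      = 2 * (\<Sum>a=1..n. \<Sum>i=1..n. M a i * M a i + M a i * M i a)"
  proof -
    have "(\<Sum>i=1..n. \<Sum>a=1..n. M i a * M i a) = (\<Sum>i=1..n. \<Sum>a=1..n. M a i * M a i)"
      by (rule sum.swap)
    then show ?thesis
      by (simp add: power2_eq_square algebra_simps sum.distrib sum_distrib_left)
  qed
  also have "(\<Sum>i=1..n. \<Sum>a=1..n. kd i a * (M a i + M i a)) = 2 * trace n M"
    by (simp add: kd_simps trace_def sum_distrib_left)
  also have "(\<Sum>i=1..n. \<Sum>a=1..n. kd i a) = real n"
    by (simp add: kd_def)
  finally show ?thesis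
    using assms by (simp add: d_def sym_traceless_form_def field_simps power2_eq_square)
qed

lemma contract_sym_traceless_tensor:
  "(\<Sum>a=1..n. \<Sum>b=1..n. \<Sum>i=1..n. \<Sum>j=1..n.
      Y a i * (kd a b * kd i j + kd i b * kd j a - 2 / real n * kd i a * kd j b) * Z b j)
   = sym_traceless_form n Y Z"
proof -
  have "(\<Sum>a=1..n. \<Sum>b=1..n. \<Sum>i=1..n. \<Sum>j=1..n. Y a i * (kd a b * kd i j) * Z b j)
      = (\<Sum>a=1..n. \<Sum>i=1..n. Y a i * Z a i)"
    by (simp add: kd_simps)
  moreover have "(\<Sum>a=1..n. \<Sum>b=1..n. \<Sum>i=1..n. \<Sum>j=1..n. Y a i * (kd i b * kd j a) * Z b j)
      = (\<Sum>a=1..n. \<Sum>i=1..n. Y a i * Z i a)"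
    by (simp add: kd_simps)
  moreover have "(\<Sum>a=1..n. \<Sum>b=1..n. \<Sum>i=1..n. \<Sum>j=1..n. Y a i * (c * kd i a * kd j b) * Z b j)
      = c * trace n Y * trace n Z" for c
    by (simp add: kd_simps trace_def sum_distrib_left sum_distrib_right mult_ac)
  ultimately show ?thesis
    unfolding sym_traceless_form_def
    by (simp only: ring_distribs sum.distrib sum_subtractf)
qed

lemma contract_sym_traceless_tensor_rank_one:
  "(\<Sum>a=1..n. \<Sum>i=1..n. \<Sum>j=1..n.
      Y a i * (u a * kd i j + u i * kd j a - 2 / real n * kd i a * u j) * w j)
   = sym_traceless_form n Y (\<lambda>b j. u b * w j)"
proof -
  have "(\<Sum>a=1..n. \<Sum>i=1..n. \<Sum>j=1..n. Y a i * (u a * kd i j) * w j)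
      = (\<Sum>a=1..n. \<Sum>i=1..n. Y a i * (u a * w i))"
    by (simp add: kd_simps mult_ac)
  moreover have "(\<Sum>a=1..n. \<Sum>i=1..n. \<Sum>j=1..n. Y a i * (u i * kd j a) * w j)
      = (\<Sum>a=1..n. \<Sum>i=1..n. Y a i * (u i * w a))"
    by (simp add: kd_simps mult_ac)
  moreover have "(\<Sum>a=1..n. \<Sum>i=1..n. \<Sum>j=1..n. Y a i * (c * kd i a * u j) * w j)
      = c * trace n Y * (\<Sum>j=1..n. u j * w j)" for c
    by (simp add: kd_simps trace_def sum_distrib_left sum_distrib_right mult_ac) (rule sum.swap)
  moreover have "trace n (\<lambda>b j. u b * w j) = (\<Sum>j=1..n. u j * w j)"
    by (simp add: trace_def)
  ultimately show ?thesis
    unfolding sym_traceless_form_def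
    by (simp only: ring_distribs sum.distrib sum_subtractf)
qed

lemma sum_upto_plus3:
  fixes n :: nat
  shows "(\<Sum>a=1..n+3. f a) = (\<Sum>a=1..n. f a) + f (n+1) + f (n+2) + (f (n+3) :: real)"
  by (simp add: numeral_3_eq_3)

lemma sum_symmetric_blocks:
  fixes Q :: "nat \<Rightarrow> nat \<Rightarrow> real"
  assumes sym: "\<And>a b. Q b a = Q a b"
    and col: "\<And>a. a \<in> {1..n} \<Longrightarrow> Q a (n+1) = 0"
    and row: "\<And>b. Q (n+2) b = 0"
  shows "(\<Sum>a=1..n+3. \<Sum>b=1..n+3. Q a b)
    = (\<Sum>a=1..n. \<Sum>b=1..n. Q a b) + 2 * (\<Sum>a=1..n. Q a (n+3))
      + Q (n+1) (n+1) + 2 * Q (n+1) (n+3) + Q (n+3) (n+3)"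
proof -
  have "(\<Sum>b=1..n. Q (n+1) b) = 0" "(\<Sum>b=1..n. Q b (n+1)) = 0"
    using col sym by simp_all
  moreover have "(\<Sum>b=1..n. Q (n+3) b) = (\<Sum>a=1..n. Q a (n+3))"
    using sym by simp
  moreover have "Q a (n+2) = 0" for a
    using row sym by metis
  ultimately show ?thesis
    unfolding sum_upto_plus3 using row sym[of "n+1" "n+3"] by (simp add: sum.distrib)
qed

lemma Xblk_sym: "Xblk n \<epsilon> \<Theta> \<mu> \<kappa> \<nu> u b a j i = Xblk n \<epsilon> \<Theta> \<mu> \<kappa> \<nu> u a b i j"
proof -
  have index_cases: "a \<le> n \<or> a = n+1 \<or> a = n+2 \<or> a = n+3 \<or> n+3 < a" for a by linarith
  show ?thesis
    using index_cases[of a] index_cases[of b] unfolding Xblk_def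
    by (elim disjE) (simp_all add: kd_commute ac_simps)
qed

lemma Xblk_middle_row: "Xblk n \<epsilon> \<Theta> \<mu> \<kappa> \<nu> u (n+2) b i j = 0"
  unfolding Xblk_def by auto

lemma Xquad_blocks:
  fixes n :: nat and \<epsilon> \<Theta> \<mu> \<kappa> \<nu> :: real and u :: "nat \<Rightarrow> real"
    and Y :: "nat \<Rightarrow> nat \<Rightarrow> real"
  defines "w \<equiv> Y (n+3)" and "v \<equiv> Y (n+1)" and "c \<equiv> \<epsilon>*\<mu>*\<Theta>"
  shows "Xquad n \<epsilon> \<Theta> \<mu> \<kappa> \<nu> u Y =
      c * sym_traceless_form n Y Y + 4 * c * sym_traceless_form n Y (\<lambda>a i. u a * w i)
    + \<epsilon>*\<nu>*(\<Sum>i=1..n. v i * v i) + 2*((real n + 2)*\<epsilon>*\<nu>*\<Theta>)*(\<Sum>i=1..n. v i * w i)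
    + \<epsilon>*\<Theta>*((real n + 2)^2*\<nu>*\<Theta> + 4*\<kappa>*\<Theta> + 4*\<mu>*sqnorm n u)
        * (\<Sum>i=1..n. w i * w i)
    + \<epsilon>*\<Theta>*(4*(real n - 2)/real n*\<mu>)*(\<Sum>i=1..n. u i * w i)^2"
proof -
  define Q where
    "Q a b = (\<Sum>i=1..n. \<Sum>j=1..n. Y a i * Xblk n \<epsilon> \<Theta> \<mu> \<kappa> \<nu> u a b i j * Y b j)" for a b
  have Q_sym: "Q b a = Q a b" for a b
    unfolding Q_def by (subst sum.swap) (simp add: Xblk_sym[of _ _ _ _ _ _ _ b a] mult_ac)
  have Q_col: "Q a (n+1) = 0" if "a \<in> {1..n}" for a
    using that by (simp add: Q_def Xblk_def)
  have Q_middle_row: "Q (n+2) b = 0" for b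
    by (simp only: Q_def Xblk_middle_row) simp
  have "Xquad n \<epsilon> \<Theta> \<mu> \<kappa> \<nu> u Y = (\<Sum>a=1..n+3. \<Sum>b=1..n+3. Q a b)"
    unfolding Xquad_def Q_def ..
  also have "\<dots> = (\<Sum>a=1..n. \<Sum>b=1..n. Q a b) + 2 * (\<Sum>a=1..n. Q a (n+3))
      + Q (n+1) (n+1) + 2 * Q (n+1) (n+3) + Q (n+3) (n+3)"
    by (rule sum_symmetric_blocks[OF Q_sym Q_col Q_middle_row])
  also have "(\<Sum>a=1..n. \<Sum>b=1..n. Q a b) = c * sym_traceless_form n Y Y"
  proof -
    have "Q a b = c * (\<Sum>i=1..n. \<Sum>j=1..n.
        Y a i * (kd a b * kd i j + kd i b * kd j a - 2 / real n * kd i a * kd j b) * Y b j)"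
      if "a \<in> {1..n}" "b \<in> {1..n}" for a b
      using that by (simp add: Q_def Xblk_def c_def sum_distrib_left mult_ac)
    then show ?thesis
      by (simp add: sum_distrib_left contract_sym_traceless_tensor[symmetric])
  qed
  also have "(\<Sum>a=1..n. Q a (n+3)) = 2 * c * sym_traceless_form n Y (\<lambda>a i. u a * w i)"
  proof -
    have "Q a (n+3) = 2 * c * (\<Sum>i=1..n. \<Sum>j=1..n.
        Y a i * (u a * kd i j + u i * kd j a - 2 / real n * kd i a * u j) * w j)"
      if "a \<in> {1..n}" for a
      using that by (simp add: Q_def Xblk_def c_def w_def sum_distrib_left mult_ac)
    then show ?thesis
      by (simp add: sum_distrib_left contract_sym_traceless_tensor_rank_one[symmetric])
  qed
  also have "Q (n+1) (n+1) = \<epsilon>*\<nu>*(\<Sum>i=1..n. v i * v i)"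
    using contract_kd[where c = "\<epsilon>*\<nu>"] by (simp add: Q_def Xblk_def v_def)
  also have "Q (n+1) (n+3) = (real n + 2)*\<epsilon>*\<nu>*\<Theta>*(\<Sum>i=1..n. v i * w i)"
    using contract_kd[where c = "(real n + 2)*\<epsilon>*\<nu>*\<Theta>"]
    by (simp add: Q_def Xblk_def v_def w_def)
  also have "Q (n+3) (n+3)
      = \<epsilon>*\<Theta>*((real n + 2)^2*\<nu>*\<Theta> + 4*\<kappa>*\<Theta> + 4*\<mu>*sqnorm n u)
          * (\<Sum>i=1..n. w i * w i)
        + \<epsilon>*\<Theta>*(4*(real n - 2)/real n*\<mu>)*(\<Sum>i=1..n. u i * w i)^2"
  proof -
    have "Xblk n \<epsilon> \<Theta> \<mu> \<kappa> \<nu> u (n+3) (n+3) i j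
        = \<epsilon>*\<Theta>*(((real n + 2)^2*\<nu>*\<Theta> + 4*\<kappa>*\<Theta> + 4*\<mu>*sqnorm n u) * kd i j
            + 4*(real n - 2)/real n*\<mu> * (u i * u j))" for i j
      by (simp add: Xblk_def)
    then show ?thesis
      unfolding Q_def w_def by (simp only: contract_kd_plus_rank_one)
  qed
  finally show ?thesis
    by (simp add: algebra_simps)
qed

lemma Xquad_eq_sum_of_squares:
  fixes n :: nat and \<epsilon> \<Theta> \<mu> \<kappa> \<nu> :: real and u :: "nat \<Rightarrow> real"
    and Y :: "nat \<Rightarrow> nat \<Rightarrow> real"
  assumes "n \<ge> 1"
  shows "Xquad n \<epsilon> \<Theta> \<mu> \<kappa> \<nu> u Y =
           \<epsilon>*\<nu>*(\<Sum>i=1..n. (Y (n+1) i + (real n + 2)*\<Theta>*Y (n+3) i)^2)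
         + 4*\<epsilon>*\<kappa>*\<Theta>^2*(\<Sum>i=1..n. (Y (n+3) i)^2)
         + \<epsilon>*\<mu>*\<Theta>/2 * (\<Sum>i=1..n. \<Sum>a=1..n.
              ((Y a i + Y i a - 2 / real n * (\<Sum>j=1..n. Y j j) * kd i a)
               + 2*(u i * Y (n+3) a + u a * Y (n+3) i
                    - 2 / real n * (\<Sum>j=1..n. u j * Y (n+3) j) * kd i a))^2)"
proof -
  define w v where "w = Y (n+3)" and "v = Y (n+1)"
  define M where "M a i = Y a i + 2 * (u a * w i)" for a i
  have trace_M: "trace n M = trace n Y + 2 * (\<Sum>j=1..n. u j * w j)"
    by (simp add: M_def trace_def sum.distrib sum_distrib_left)
  have "(\<Sum>i=1..n. \<Sum>a=1..n.
           ((Y a i + Y i a - 2 / real n * (\<Sum>j=1..n. Y j j) * kd i a)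
            + 2*(u i * w a + u a * w i - 2 / real n * (\<Sum>j=1..n. u j * w j) * kd i a))^2)
      = (\<Sum>i=1..n. \<Sum>a=1..n. (M a i + M i a - 2 / real n * trace n M * kd i a)^2)"
    (is "?S = _")
    unfolding trace_M by (simp add: M_def trace_def algebra_simps)
  also have "\<dots> = 2 * sym_traceless_form n M M"
    using assms by (intro sum_sq_sym_traceless) simp
  also have "sym_traceless_form n M M
      = sym_traceless_form n Y Y + 4 * sym_traceless_form n Y (\<lambda>a i. u a * w i)
        + 4 * ((\<Sum>a=1..n. (u a)^2) * (\<Sum>i=1..n. (w i)^2) + (1 - 2 / real n) * (\<Sum>a=1..n. u a * w a)^2)"
    (is "_ = ?R")
    unfolding M_def sym_traceless_form_add_scaled sym_traceless_form_rank_one by simp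
  finally have squares: "?S = 2 * ?R" .
  have "(\<Sum>i=1..n. (v i + (real n + 2)*\<Theta>*w i)^2)
      = (\<Sum>i=1..n. v i * v i) + 2*((real n + 2)*\<Theta>)*(\<Sum>i=1..n. v i * w i)
        + ((real n + 2)*\<Theta>)^2*(\<Sum>i=1..n. w i * w i)"
    by (simp add: power2_eq_square algebra_simps sum.distrib sum_distrib_left)
  moreover have "sqnorm n u = (\<Sum>a=1..n. (u a)^2)"
    by (simp add: sqnorm_def)
  ultimately show ?thesis
    using assms unfolding Xquad_blocks squares w_def[symmetric] v_def[symmetric]
    by (simp add: field_simps power2_eq_square)
qed

theorem lemma4p7:
  fixes n :: nat and \<epsilon> \<Theta> \<mu> \<kappa> \<nu> :: real and u :: "nat \<Rightarrow> real"
    and Y :: "nat \<Rightarrow> nat \<Rightarrow> real"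
  assumes "n \<ge> 1" and "\<epsilon> > 0" and "\<Theta> > 0" and "\<mu> > 0" and "\<kappa> > 0" and "\<nu> > 0"
  shows "Xquad n \<epsilon> \<Theta> \<mu> \<kappa> \<nu> u Y =
           \<epsilon>*\<nu>*(\<Sum>i=1..n. (Y (n+1) i + (real n + 2)*\<Theta>*Y (n+3) i)^2)
         + 4*\<epsilon>*\<kappa>*\<Theta>^2*(\<Sum>i=1..n. (Y (n+3) i)^2)
         + \<epsilon>*\<mu>*\<Theta>/2 * (\<Sum>i=1..n. \<Sum>a=1..n.
              ((Y a i + Y i a - 2 / real n * (\<Sum>j=1..n. Y j j) * kd i a)
               + 2*(u i * Y (n+3) a + u a * Y (n+3) i
                    - 2 / real n * (\<Sum>j=1..n. u j * Y (n+3) j) * kd i a))^2)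
       \<and> Xquad n \<epsilon> \<Theta> \<mu> \<kappa> \<nu> u Y \<ge> 0
       \<and> (\<forall>Z. Xquad n \<epsilon> \<Theta> \<mu> \<kappa> \<nu> u Z \<ge> 0)"
proof -
  have nonneg: "Xquad n \<epsilon> \<Theta> \<mu> \<kappa> \<nu> u Z \<ge> 0" for Z
    unfolding Xquad_eq_sum_of_squares[OF assms(1)] using assms
    by (intro add_nonneg_nonneg mult_nonneg_nonneg divide_nonneg_nonneg sum_nonneg zero_le_power2) simp_all
  show ?thesis
    using Xquad_eq_sum_of_squares[OF assms(1)] nonneg by blast
qed

end
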